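(* Let $N\ge 1$. For each $K\in\{0,1,\dots,N\}$ let $h_{n,K}=c_K\sum_{|\gamma|=K}h_\gamma$, where $c_K>0$ is chosen so that $\|h_{n,K}\|=1$. Then each $h_{n,K}$ is an eigenvector of $L(\mathcal{B}_N)$ with eigenvalue $2K$; the vectors $h_{n,K}$, $K=0,\dots,N$, are mutually orthogonal; and each $h_{n,K}$ is orthogonal to every Dirichlet eigenvector of $L(\mathcal{B}_N)$.
   Context: $L(\mathcal{B}_N)$ is the unnormalized Laplacian $(Lf)(v)=\sum_{w\sim v}[f(v)-f(w)]$ of the Boolean cube $\mathcal{B}_N$, whose vertex set is $\mathbb{Z}_2^N$ with $v\sim w$ iff $v-w=e_i$ for some standard basis vector $e_i$. For $\gamma\in\mathbb{Z}_2^N$, $|\gamma|$ denotes the number of coordinates of $\gamma$ equal to $1$, and $h_\gamma(v)=2^{-N/2}(-1)^{\langle v,\gamma\rangle}$ is the corresponding Hadamard vector (an eigenvector of $L(\mathcal{B}_N)$ with eigenvalue $2|\gamma|$); the $h_\gamma$ form an orthonormal basis of $\ell^2(\mathcal{B}_N)$. A Dirichlet eigenvector of $L(\mathcal{B}_N)$ is an eigenvector of $L(\mathcal{B}_N)$ vanishing at $\mathbf{0}=(0,\dots,0)$ and at $\mathbf{1}=(1,\dots,1)$. Inner products are the standard ones on $\mathbb{C}^{V}$. *)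

theory Defs
  imports "HOL-Analysis.Analysis"
begin

text \<open>Vertices of the Boolean cube B_N: elements of Z_2^N, represented as
  functions nat => bool supported in {0..<N}.\<close>
definition cube :: "nat \<Rightarrow> (nat \<Rightarrow> bool) set" where
  "cube N = {v. \<forall>i. v i \<longrightarrow> i < N}"

definition zero_vtx :: "nat \<Rightarrow> bool" where
  "zero_vtx = (\<lambda>i. False)"

definition one_vtx :: "nat \<Rightarrow> (nat \<Rightarrow> bool)" where
  "one_vtx N = (\<lambda>i. i < N)"

definition weight :: "(nat \<Rightarrow> bool) \<Rightarrow> nat" where
  "weight g = card {i. g i}"

definition lap :: "nat \<Rightarrow> ((nat \<Rightarrow> bool) \<Rightarrow> complex) \<Rightarrow> (nat \<Rightarrow> bool) \<Rightarrow> complex" where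
  "lap N f v = (\<Sum>i<N. f v - f (v(i := \<not> v i)))"

definition hada :: "nat \<Rightarrow> (nat \<Rightarrow> bool) \<Rightarrow> (nat \<Rightarrow> bool) \<Rightarrow> complex" where
  "hada N g v = complex_of_real (1 / sqrt (2 ^ N)) * (-1) ^ card {i. v i \<and> g i}"

definition cinner :: "nat \<Rightarrow> ((nat \<Rightarrow> bool) \<Rightarrow> complex) \<Rightarrow> ((nat \<Rightarrow> bool) \<Rightarrow> complex) \<Rightarrow> complex" where
  "cinner N f g = (\<Sum>v\<in>cube N. f v * cnj (g v))"

definition cnorm :: "nat \<Rightarrow> ((nat \<Rightarrow> bool) \<Rightarrow> complex) \<Rightarrow> real" where
  "cnorm N f = sqrt (Re (cinner N f f))"

definition is_eigvec :: "nat \<Rightarrow> complex \<Rightarrow> ((nat \<Rightarrow> bool) \<Rightarrow> complex) \<Rightarrow> bool" where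
  "is_eigvec N lam f \<longleftrightarrow> (\<exists>v\<in>cube N. f v \<noteq> 0) \<and> (\<forall>v\<in>cube N. lap N f v = lam * f v)"

definition is_dirichlet_eigvec :: "nat \<Rightarrow> ((nat \<Rightarrow> bool) \<Rightarrow> complex) \<Rightarrow> bool" where
  "is_dirichlet_eigvec N f \<longleftrightarrow> (\<exists>lam. is_eigvec N lam f) \<and> f zero_vtx = 0 \<and> f (one_vtx N) = 0"

definition hsum :: "nat \<Rightarrow> nat \<Rightarrow> (nat \<Rightarrow> bool) \<Rightarrow> complex" where
  "hsum N K v = (\<Sum>g\<in>{g\<in>cube N. weight g = K}. hada N g v)"

end

(* The Laplacian is self-adjoint, so eigenvectors whose eigenvalues a, b satisfy a \<noteq> cnj b
   are orthogonal.  Flipping coordinate i changes the sign of h_gamma exactly when gamma_i = 1,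
   so h_gamma is an eigenvector for 2|gamma|, and hence so is h_{n,K}.  For a Dirichlet
   eigenvector f with eigenvalue lam, f is orthogonal to every h_gamma with 2|gamma| \<noteq> cnj lam;
   so if 2K = cnj lam its inner product with h_{n,K} equals that with the sum of all h_gamma, which
   is a multiple of the indicator of the origin, where f vanishes. *)
theory Submission
  imports Defs
begin

lemma finite_cube: "finite (cube N)"
proof (rule finite_subset)
  show "cube N \<subseteq> (\<lambda>S i. i \<in> S) ` Pow {..<N}"
  proof
    fix v assume "v \<in> cube N"
    hence "v = (\<lambda>i. i \<in> {i. v i})" "{i. v i} \<in> Pow {..<N}" by (auto simp: cube_def)
    thus "v \<in> (\<lambda>S i. i \<in> S) ` Pow {..<N}" by blast
  qed
qed simp

lemma finite_Collect_in_cube: "g \<in> cube N \<Longrightarrow> finite {j. v j \<and> g j}"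
  by (rule finite_subset[of _ "{..<N}"]) (auto simp: cube_def)

lemma sum_cube_flip:
  assumes "i < N"
  shows "(\<Sum>v\<in>cube N. F (v(i := \<not> v i))) = (\<Sum>v\<in>cube N. F v)"
  by (rule sum.reindex_bij_witness[where i="\<lambda>v. v(i := \<not> v i)" and j="\<lambda>v. v(i := \<not> v i)"])
     (use assms in \<open>auto simp: cube_def\<close>)

lemma neg_one_power_card_toggle:
  assumes "finite A"
  shows "(-1::'a::ring_1) ^ card (if i \<in> A then A - {i} else insert i A) = - ((-1) ^ card A)"
proof (cases "i \<in> A")
  case True
  then have "(-1::'a) ^ card A = - ((-1) ^ card (A - {i}))"
    by (metis card.remove[OF assms True] power_Suc mult_minus1)
  with True show ?thesis by simp
qed (use assms in simp)

lemma hada_commute: "hada N g v = hada N v g"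
  unfolding hada_def by (simp add: conj_commute)

lemma hada_flip:
  assumes "g \<in> cube N"
  shows "hada N g (v(i := \<not> v i)) = (if g i then -1 else 1) * hada N g v"
proof (cases "g i")
  case True
  let ?S = "{j. v j \<and> g j}"
  have toggle: "{j. (v(i := \<not> v i)) j \<and> g j} = (if i \<in> ?S then ?S - {i} else insert i ?S)"
    using True by auto
  have "(-1::complex) ^ card {j. (v(i := \<not> v i)) j \<and> g j} = - ((-1) ^ card ?S)"
    unfolding toggle by (rule neg_one_power_card_toggle[OF finite_Collect_in_cube[OF assms]])
  with True show ?thesis unfolding hada_def by simp
next
  case False
  then have "{j. (v(i := \<not> v i)) j \<and> g j} = {j. v j \<and> g j}" by auto
  with False show ?thesis unfolding hada_def by simp
qed

lemma lap_hada:
  assumes "g \<in> cube N"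
  shows "lap N (hada N g) v = of_nat (2 * weight g) * hada N g v"
proof -
  have "lap N (hada N g) v = (\<Sum>i<N. if g i then 2 * hada N g v else 0)"
    unfolding lap_def using assms by (intro sum.cong) (auto simp: hada_flip)
  also have "\<dots> = (\<Sum>i\<in>{i\<in>{..<N}. g i}. 2 * hada N g v)"
    by (rule sum.inter_filter[symmetric]) simp
  also have "{i\<in>{..<N}. g i} = {i. g i}" using assms by (auto simp: cube_def)
  finally show ?thesis by (simp add: weight_def mult_ac)
qed

lemma lap_cmult: "lap N (\<lambda>v. a * f v) v = a * lap N f v"
  unfolding lap_def by (simp add: sum_distrib_left algebra_simps)

lemma lap_sum: "lap N (\<lambda>v. \<Sum>g\<in>S. F g v) v = (\<Sum>g\<in>S. lap N (F g) v)"
  unfolding lap_def by (simp add: sum_subtractf[symmetric] sum.swap[of _ S])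

lemma lap_hsum: "lap N (hsum N K) v = of_nat (2 * K) * hsum N K v"
proof -
  have "lap N (hsum N K) v = (\<Sum>g\<in>{g\<in>cube N. weight g = K}. lap N (hada N g) v)"
    unfolding hsum_def by (rule lap_sum)
  also have "\<dots> = (\<Sum>g\<in>{g\<in>cube N. weight g = K}. of_nat (2 * K) * hada N g v)"
    by (intro sum.cong) (auto simp: lap_hada)
  finally show ?thesis by (simp add: hsum_def sum_distrib_left)
qed

lemma cinner_cmult_left: "cinner N (\<lambda>v. a * f v) g = a * cinner N f g"
  unfolding cinner_def by (simp add: sum_distrib_left mult.assoc)

lemma cinner_sum_left: "cinner N (\<lambda>v. \<Sum>x\<in>S. F x v) g = (\<Sum>x\<in>S. cinner N (F x) g)"
  unfolding cinner_def by (simp add: sum_distrib_right sum.swap[of _ S])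

lemma cinner_lap_left: "cinner N (lap N f) g = cinner N f (lap N g)"
proof -
  let ?flip = "\<lambda>i v. v(i := \<not> v i)"
  have flip: "(\<Sum>v\<in>cube N. f (?flip i v) * cnj (g v)) = (\<Sum>v\<in>cube N. f v * cnj (g (?flip i v)))"
    if "i < N" for i
    using sum_cube_flip[OF that, of "\<lambda>v. f v * cnj (g (?flip i v))"] by simp
  have "cinner N (lap N f) g = (\<Sum>v\<in>cube N. \<Sum>i<N. f v * cnj (g v) - f (?flip i v) * cnj (g v))"
    unfolding cinner_def lap_def by (simp add: sum_distrib_right left_diff_distrib)
  also have "\<dots> = (\<Sum>i<N. \<Sum>v\<in>cube N. f v * cnj (g v) - f (?flip i v) * cnj (g v))"
    by (rule sum.swap)
  also have "\<dots> = (\<Sum>i<N. \<Sum>v\<in>cube N. f v * cnj (g v) - f v * cnj (g (?flip i v)))"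
    by (rule sum.cong) (simp_all add: sum_subtractf flip)
  also have "\<dots> = (\<Sum>v\<in>cube N. \<Sum>i<N. f v * cnj (g v) - f v * cnj (g (?flip i v)))"
    by (rule sum.swap)
  also have "\<dots> = cinner N f (lap N g)"
    unfolding cinner_def lap_def by (simp add: sum_distrib_left right_diff_distrib)
  finally show ?thesis .
qed

lemma cinner_lap_eigen_eq_0:
  assumes "\<forall>v\<in>cube N. lap N f v = a * f v" and "\<forall>v\<in>cube N. lap N g v = b * g v"
    and "a \<noteq> cnj b"
  shows "cinner N f g = 0"
proof -
  have "a * cinner N f g = cinner N (lap N f) g"
    using assms(1) by (simp add: cinner_def sum_distrib_left mult.assoc)
  also have "\<dots> = cinner N f (lap N g)" by (rule cinner_lap_left)
  also have "\<dots> = cnj b * cinner N f g"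
    using assms(2) by (simp add: cinner_def sum_distrib_left mult_ac)
  finally show ?thesis using assms(3) by simp
qed

lemma sum_hada_eq_0:
  assumes "v \<in> cube N" and "v \<noteq> zero_vtx"
  shows "(\<Sum>g\<in>cube N. hada N g v) = 0"
proof -
  obtain i where "v i" using assms(2) by (auto simp: zero_vtx_def)
  with assms(1) have "i < N" by (auto simp: cube_def)
  have "(\<Sum>g\<in>cube N. hada N g v) = (\<Sum>g\<in>cube N. hada N (g(i := \<not> g i)) v)"
    using sum_cube_flip[OF \<open>i < N\<close>, of "\<lambda>g. hada N g v"] by simp
  also have "\<dots> = - (\<Sum>g\<in>cube N. hada N g v)"
    using \<open>v i\<close> by (simp add: hada_commute[of N _ v] hada_flip[OF assms(1)] sum_negf)
  finally show ?thesis by simp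
qed

lemma sum_cinner_hada_eq_0:
  assumes "f zero_vtx = 0"
  shows "(\<Sum>g\<in>cube N. cinner N (hada N g) f) = 0"
proof -
  have "(\<Sum>g\<in>cube N. cinner N (hada N g) f) = (\<Sum>v\<in>cube N. (\<Sum>g\<in>cube N. hada N g v) * cnj (f v))"
    by (simp add: cinner_sum_left[symmetric]) (simp add: cinner_def)
  also have "\<dots> = 0"
    using assms by (intro sum.neutral) (metis mult_eq_0_iff complex_cnj_zero sum_hada_eq_0)
  finally show ?thesis .
qed

lemma cinner_hsum_dirichlet_eq_0:
  assumes eigen: "\<forall>v\<in>cube N. lap N f v = lam * f v" and "f zero_vtx = 0"
  shows "cinner N (hsum N K) f = 0"
proof -
  have hada_orth: "cinner N (hada N g) f = 0" if "g \<in> cube N" "of_nat (2 * weight g) \<noteq> cnj lam" for g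
    using that eigen by (intro cinner_lap_eigen_eq_0) (auto simp: lap_hada)
  have hsum_eq: "cinner N (hsum N K) f = (\<Sum>g\<in>{g\<in>cube N. weight g = K}. cinner N (hada N g) f)"
    unfolding hsum_def by (rule cinner_sum_left)
  show ?thesis
  proof (cases "of_nat (2 * K) = cnj lam")
    case True
    have "(\<Sum>g\<in>{g\<in>cube N. weight g = K}. cinner N (hada N g) f) = (\<Sum>g\<in>cube N. cinner N (hada N g) f)"
      by (rule sum.mono_neutral_left) (auto simp: finite_cube True[symmetric] hada_orth)
    with hsum_eq show ?thesis using sum_cinner_hada_eq_0[of f N] assms(2) by simp
  qed (use hsum_eq hada_orth in simp)
qed

theorem lemma3:
  fixes N :: nat and c :: "nat \<Rightarrow> real"
  assumes "N \<ge> 1"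
    and "\<And>K. K \<le> N \<Longrightarrow> c K > 0"
    and "\<And>K. K \<le> N \<Longrightarrow> cnorm N (\<lambda>v. complex_of_real (c K) * hsum N K v) = 1"
  defines "h \<equiv> (\<lambda>K v. complex_of_real (c K) * hsum N K v)"
  shows "(\<forall>K\<le>N. is_eigvec N (of_nat (2 * K)) (h K))
       \<and> (\<forall>K\<le>N. \<forall>K'\<le>N. K \<noteq> K' \<longrightarrow> cinner N (h K) (h K') = 0)
       \<and> (\<forall>K\<le>N. \<forall>f. is_dirichlet_eigvec N f \<longrightarrow> cinner N (h K) f = 0)"
proof (intro conjI allI impI)
  have lap_h: "lap N (h K) v = of_nat (2 * K) * h K v" for K v
    unfolding h_def by (simp add: lap_cmult lap_hsum)
  fix K assume "K \<le> N"
  have "\<exists>v\<in>cube N. h K v \<noteq> 0"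
  proof (rule ccontr)
    assume "\<not> ?thesis"
    hence "cnorm N (h K) = 0" by (simp add: cnorm_def cinner_def)
    with assms(3)[OF \<open>K \<le> N\<close>] show False by (simp add: h_def)
  qed
  then show "is_eigvec N (of_nat (2 * K)) (h K)"
    by (simp add: is_eigvec_def lap_h)
next
  fix K K' :: nat assume "K \<noteq> K'"
  show "cinner N (h K) (h K') = 0"
    using \<open>K \<noteq> K'\<close> by (intro cinner_lap_eigen_eq_0) (auto simp: h_def lap_cmult lap_hsum)
next
  fix K f assume "is_dirichlet_eigvec N f"
  then obtain lam where "\<forall>v\<in>cube N. lap N f v = lam * f v" "f zero_vtx = 0"
    unfolding is_dirichlet_eigvec_def is_eigvec_def by blast
  then have "cinner N (hsum N K) f = 0" by (rule cinner_hsum_dirichlet_eq_0)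
  then show "cinner N (h K) f = 0"
    unfolding h_def cinner_cmult_left by simp
qed

end
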